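(* Let $n\ge 2$, $N=\{1,\dots,n\}$, for each $i\in N$ let $A_i$ be a nonempty finite set, $A=\prod_{i\in N}A_i$, and let $u_i:A\to\mathbb{R}$ for $i\in N$. Then: (1) for any $\delta,\delta'$ with $0<\delta<\delta'\le 1$ and any $T\in\mathbb{N}$, $F(\delta',T)\subseteq F(\delta,T)$; (2) for any $\delta\in(0,1]$ and any $T\in\mathbb{N}$, $F(\delta,T)\subseteq F(\delta,T+1)$.
   Context: For $\delta\in(0,1]$, $T\in\mathbb{N}$ and $a^{[nT]}=(a^1,\dots,a^{nT})\in A^{nT}$, extend indices periodically by $a^s=a^{s-nT}$ for $s\ge nT+1$, and define for $i\in N$ $$U_i(a^{[nT]})=\frac{1}{\sum_{k=1}^{nT}\delta^{k-1}}\sum_{k=1}^{nT}\delta^{k-1}u_i\big(a^{(i-1)T+k}\big),$$ $U(a^{[nT]})=(U_i(a^{[nT]}))_{i\in N}$, and $F(\delta,T)=\operatorname{co}\left(\bigcup_{a^{[nT]}\in A^{nT}}\{U(a^{[nT]})\}\right)\subseteq\mathbb{R}^n$, where $\operatorname{co}$ denotes convex hull. *)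

theory Defs
  imports "HOL-Analysis.Analysis"
begin

text \<open>Convex hull of a set of payoff vectors, vectors in R^n being represented as
  functions nat => real (only coordinates 1..n are used; all others are 0).\<close>
definition co :: "(nat \<Rightarrow> real) set \<Rightarrow> (nat \<Rightarrow> real) set" where
  "co S = {x. \<exists>(m::nat) (c::nat \<Rightarrow> real) (p::nat \<Rightarrow> nat \<Rightarrow> real).
              (\<forall>j<m. 0 \<le> c j \<and> p j \<in> S) \<and> (\<Sum>j<m. c j) = 1 \<and>
              x = (\<lambda>i. \<Sum>j<m. c j * p j i) }"

definition per :: "nat \<Rightarrow> nat \<Rightarrow> nat" where
  "per L s = ((s - 1) mod L) + 1"

text \<open>U_i(a^[nT]); a sequence is a map k \<mapsto> a k (action profile) on {1..nT}.\<close>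
definition Upay :: "nat \<Rightarrow> nat \<Rightarrow> real \<Rightarrow> (nat \<Rightarrow> (nat \<Rightarrow> 'a) \<Rightarrow> real)
                    \<Rightarrow> (nat \<Rightarrow> (nat \<Rightarrow> 'a)) \<Rightarrow> nat \<Rightarrow> real" where
  "Upay n T \<delta> u a i =
     (\<Sum>k=1..n*T. \<delta> ^ (k - 1) * u i (a (per (n*T) ((i - 1) * T + k))))
     / (\<Sum>k=1..n*T. \<delta> ^ (k - 1))"

definition Uvec :: "nat \<Rightarrow> nat \<Rightarrow> real \<Rightarrow> (nat \<Rightarrow> (nat \<Rightarrow> 'a) \<Rightarrow> real)
                    \<Rightarrow> (nat \<Rightarrow> (nat \<Rightarrow> 'a)) \<Rightarrow> (nat \<Rightarrow> real)" where
  "Uvec n T \<delta> u a = (\<lambda>i. if i \<in> {1..n} then Upay n T \<delta> u a i else 0)"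

definition Fset :: "nat \<Rightarrow> (nat \<Rightarrow> 'a set) \<Rightarrow> (nat \<Rightarrow> (nat \<Rightarrow> 'a) \<Rightarrow> real)
                    \<Rightarrow> real \<Rightarrow> nat \<Rightarrow> (nat \<Rightarrow> real) set" where
  "Fset n Aset u \<delta> T =
     co (Uvec n T \<delta> u ` (PiE {1..n*T} (\<lambda>_. PiE {1..n} Aset)))"

end

theory Submission
  imports Defs
begin

text \<open>For the comparison of discount factors, summation by
  parts against the one-step recursion of discounted sums writes the value at the higher factor as a
  convex combination of the values of the rotations of the cycle at the lower factor, with weights
  that do not depend on i. For the comparison of block lengths, each block of T periods is followed
  by an extra period, filled in the k-th padded cycle with the profile played k periods after the
  block; mixing these cycles with weights proportional to \<delta>^k makes the extra period pay exactly
  the normalised continuation value, which leaves the normalised value of the cycle unchanged.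
  Either way every payoff vector of one set is a convex combination of payoff vectors of the other.\<close>

lemma co_inc: "y \<in> S \<Longrightarrow> y \<in> co S"
  unfolding co_def by (rule CollectI, rule exI[of _ 1], rule exI[of _ "\<lambda>_. 1"], rule exI[of _ "\<lambda>_. y"]) auto

lemma sum_lessThan_add_split:
  fixes f :: "nat \<Rightarrow> 'b::comm_monoid_add"
  shows "(\<Sum>j<m + k. f j) = (\<Sum>j<m. f j) + (\<Sum>j<k. f (m + j))"
  by (induction k) (simp_all add: ac_simps)

lemma co_convex_comb2:
  assumes "y \<in> co S" "w \<in> co S" "0 \<le> t" "t \<le> 1"
  shows "(\<lambda>i. t * y i + (1 - t) * w i) \<in> co S"
proof -
  obtain m1 :: nat and c1 p1 where 1: "\<forall>j<m1. 0 \<le> c1 j \<and> p1 j \<in> S" "(\<Sum>j<m1. c1 j) = 1"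
    "y = (\<lambda>i. \<Sum>j<m1. c1 j * p1 j i)"
    using assms(1) unfolding co_def by blast
  obtain m2 :: nat and c2 p2 where 2: "\<forall>j<m2. 0 \<le> c2 j \<and> p2 j \<in> S" "(\<Sum>j<m2. c2 j) = 1"
    "w = (\<lambda>i. \<Sum>j<m2. c2 j * p2 j i)"
    using assms(2) unfolding co_def by blast
  define c where "c j = (if j < m1 then t * c1 j else (1 - t) * c2 (j - m1))" for j
  define p where "p j = (if j < m1 then p1 j else p2 (j - m1))" for j
  have "\<forall>j<m1 + m2. 0 \<le> c j \<and> p j \<in> S"
    using 1 2 assms(3,4) by (auto simp: c_def p_def)
  moreover have "(\<Sum>j<m1 + m2. c j) = 1"
    using 1 2 by (simp add: sum_lessThan_add_split c_def flip: sum_distrib_left)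
  moreover have "(\<lambda>i. t * y i + (1 - t) * w i) = (\<lambda>i. \<Sum>j<m1 + m2. c j * p j i)"
    unfolding 1 2 by (simp add: sum_lessThan_add_split c_def p_def sum_distrib_left mult.assoc)
  ultimately show ?thesis
    unfolding co_def by (intro CollectI exI[of _ "m1 + m2"] exI[of _ c] exI[of _ p]) simp
qed

lemma co_convex_comb:
  fixes c :: "nat \<Rightarrow> real"
  assumes "\<forall>k<m. 0 \<le> c k \<and> y k \<in> co S" "(\<Sum>k<m. c k) = 1"
  shows "(\<lambda>i. \<Sum>k<m. c k * y k i) \<in> co S"
  using assms
proof (induction m arbitrary: c)
  case 0
  then show ?case by simp
next
  case (Suc m)
  define t where "t = (\<Sum>k<m. c k)"
  have "0 \<le> t"
    unfolding t_def using Suc.prems(1) by (intro sum_nonneg) auto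
  have cm: "c m = 1 - t"
    using Suc.prems(2) unfolding t_def by simp
  show ?case
  proof (cases "t = 0")
    case True
    then have "\<forall>k<m. c k = 0"
      using Suc.prems(1) unfolding t_def by (subst (asm) sum_nonneg_eq_0_iff) auto
    then have "(\<lambda>i. \<Sum>k<Suc m. c k * y k i) = y m"
      using cm True by auto
    then show ?thesis
      using Suc.prems(1) by simp
  next
    case False
    have "(\<lambda>i. \<Sum>k<m. c k / t * y k i) \<in> co S"
      using Suc.prems(1) \<open>0 \<le> t\<close> False
      by (intro Suc.IH) (auto simp: t_def simp flip: sum_divide_distrib)
    moreover have "t \<le> 1"
      using cm Suc.prems(1) by auto
    ultimately have "(\<lambda>i. t * (\<Sum>k<m. c k / t * y k i) + (1 - t) * y m i) \<in> co S"
      using Suc.prems(1) \<open>0 \<le> t\<close> by (intro co_convex_comb2) auto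
    moreover have "(\<lambda>i. t * (\<Sum>k<m. c k / t * y k i) + (1 - t) * y m i) = (\<lambda>i. \<Sum>k<Suc m. c k * y k i)"
      using False cm by (simp add: sum_distrib_left)
    ultimately show ?thesis
      by simp
  qed
qed

lemma co_minimal:
  assumes "\<forall>y\<in>S'. y \<in> co S"
  shows "co S' \<subseteq> co S"
proof
  fix x assume "x \<in> co S'"
  then obtain m :: nat and c p where "\<forall>j<m. 0 \<le> c j \<and> p j \<in> S'" "(\<Sum>j<m. c j) = 1"
    "x = (\<lambda>i. \<Sum>j<m. c j * p j i)"
    unfolding co_def by blast
  then show "x \<in> co S"
    using assms co_convex_comb[of m c p S] by auto
qed

definition has_period :: "nat \<Rightarrow> (nat \<Rightarrow> 'b) \<Rightarrow> bool" where
  "has_period L f \<longleftrightarrow> (\<forall>q. f (q + L) = f q)"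

lemma has_period_add_mult:
  "has_period L f \<Longrightarrow> f (q + m * L) = f q"
  by (induction m) (simp_all add: has_period_def, metis add.assoc add.commute)

lemma has_period_mod:
  "has_period L f \<Longrightarrow> f (q mod L) = f q"
  using has_period_add_mult[of L f "q mod L" "q div L"] by simp

lemma has_period_shift:
  "has_period L f \<Longrightarrow> has_period L (\<lambda>q. f (q + s))"
  unfolding has_period_def by (metis add.commute add.left_commute)

lemma sum_powers_pos: "0 < x \<Longrightarrow> 0 < L \<Longrightarrow> 0 < (\<Sum>k<L. (x::real) ^ k)"
  by (intro sum_pos) auto

definition disc_sum :: "real \<Rightarrow> (nat \<Rightarrow> real) \<Rightarrow> nat \<Rightarrow> nat \<Rightarrow> real" where
  "disc_sum x V z L = (\<Sum>k<L. x ^ k * V (z + k))"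

definition disc_avg :: "real \<Rightarrow> (nat \<Rightarrow> real) \<Rightarrow> nat \<Rightarrow> nat \<Rightarrow> real" where
  "disc_avg x V z L = disc_sum x V z L / (\<Sum>k<L. x ^ k)"

lemma disc_avg_const_one: "0 < x \<Longrightarrow> 0 < L \<Longrightarrow> disc_avg x (\<lambda>_. 1) z L = 1"
  using sum_powers_pos[of x L] by (simp add: disc_avg_def disc_sum_def)

lemma disc_sum_shift: "disc_sum x (\<lambda>q. V (q + s)) z L = disc_sum x V (z + s) L"
  by (simp add: disc_sum_def ac_simps)

lemma disc_avg_shift: "disc_avg x (\<lambda>q. V (q + s)) z L = disc_avg x V (z + s) L"
  by (simp add: disc_avg_def disc_sum_shift)

lemma disc_sum_linear:
  fixes c :: "nat \<Rightarrow> real"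
  shows "(\<Sum>k<m. c k * disc_sum x (V k) z L) = disc_sum x (\<lambda>q. \<Sum>k<m. c k * V k q) z L"
  unfolding disc_sum_def by (simp add: sum_distrib_left sum.swap[of _ "{..<m}"] algebra_simps)

lemma disc_avg_linear:
  fixes c :: "nat \<Rightarrow> real"
  shows "(\<Sum>k<m. c k * disc_avg x (V k) z L) = disc_avg x (\<lambda>q. \<Sum>k<m. c k * V k q) z L"
  by (simp add: disc_avg_def sum_divide_distrib[symmetric] disc_sum_linear)

lemma has_period_disc_sum:
  "has_period L V \<Longrightarrow> has_period L (\<lambda>z. disc_sum x V z M)"
  using has_period_shift[of L V] by (simp add: has_period_def disc_sum_def ac_simps)

lemma disc_sum_step:
  assumes "has_period L V"
  shows "disc_sum x V z L = (1 - x ^ L) * V z + x * disc_sum x V (Suc z) L"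
proof -
  have "x * disc_sum x V (Suc z) L = (\<Sum>k<Suc L. x ^ k * V (z + k)) - V z"
    unfolding disc_sum_def sum.lessThan_Suc_shift by (simp add: sum_distrib_left algebra_simps)
  also have "\<dots> = disc_sum x V z L + x ^ L * V z - V z"
    using assms by (simp add: disc_sum_def has_period_def)
  finally show ?thesis
    by (simp add: algebra_simps)
qed

lemma sum_lessThan_mult_blocks:
  fixes f :: "nat \<Rightarrow> 'b::comm_monoid_add"
  shows "(\<Sum>q<n * T. f q) = (\<Sum>m<n. \<Sum>r<T. f (m * T + r))"
proof -
  have "sum f {m * T..<m * T + T} = (\<Sum>r<T. f (m * T + r))" for m
    using sum.shift_bounds_nat_ivl[of f 0 "m * T" T] by (simp add: atLeast0LessThan add.commute)
  then show ?thesis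
    by (simp flip: sum.nat_group)
qed

lemma disc_sum_blocks:
  "disc_sum x V (j * T) (n * T) = disc_sum (x ^ T) (\<lambda>l. disc_sum x V (l * T) T) j n"
proof -
  have "disc_sum x V (j * T) (n * T) = (\<Sum>m<n. \<Sum>r<T. x ^ (m * T + r) * V (j * T + (m * T + r)))"
    unfolding disc_sum_def by (rule sum_lessThan_mult_blocks)
  also have "\<dots> = (\<Sum>m<n. (x ^ T) ^ m * (\<Sum>r<T. x ^ r * V ((j + m) * T + r)))"
    by (simp add: sum_distrib_left power_add algebra_simps flip: power_mult)
  finally show ?thesis
    unfolding disc_sum_def .
qed

lemma disc_sum_block_step:
  assumes "has_period (n * T) V"
  shows "disc_sum x V (l * T) (n * T)
    = (1 - x ^ (n * T)) * disc_sum x V (l * T) T + x ^ T * disc_sum x V (Suc l * T) (n * T)"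
proof -
  let ?B = "\<lambda>l. disc_sum x V (l * T) T"
  have "has_period n ?B"
    using has_period_disc_sum[OF assms, of x T] by (simp add: has_period_def algebra_simps)
  moreover have "(x ^ T) ^ n = x ^ (n * T)"
    by (simp add: mult.commute flip: power_mult)
  ultimately show ?thesis
    using disc_sum_step[of n ?B "x ^ T" l] by (simp only: disc_sum_blocks)
qed

definition rotation_weight :: "real \<Rightarrow> real \<Rightarrow> nat \<Rightarrow> nat \<Rightarrow> real" where
  "rotation_weight x x' L s = (if s = 0 then 1 - x * x' ^ (L - 1) else x' ^ (s - 1) * (x' - x))"

lemma rotation_weight_nonneg:
  assumes "0 \<le> x" "x \<le> x'" "x' \<le> 1"
  shows "0 \<le> rotation_weight x x' L s"
proof -
  have "x * x' ^ (L - 1) \<le> 1"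
    using assms by (intro mult_le_one power_le_one) auto
  then show ?thesis
    using assms unfolding rotation_weight_def by simp
qed

text \<open>Summation by parts against \<open>disc_sum_step\<close>.\<close>
lemma disc_sum_rotations:
  assumes V: "has_period L V" and "0 < L"
  shows "(1 - x ^ L) * disc_sum x' V z L = (\<Sum>s<L. rotation_weight x x' L s * disc_sum x V (z + s) L)"
proof -
  obtain M where M: "L = Suc M"
    using \<open>0 < L\<close> gr0_conv_Suc by blast
  let ?G = "\<lambda>s. disc_sum x V (z + s) L"
  have "(1 - x ^ L) * disc_sum x' V z L = (\<Sum>s<L. x' ^ s * (?G s - x * ?G (Suc s)))"
    unfolding disc_sum_def[of x'] sum_distrib_left
    by (intro sum.cong refl) (simp add: disc_sum_step[OF V, of x "z + _"])
  also have "\<dots> = (\<Sum>s<L. x' ^ s * ?G s) - x * (\<Sum>s<L. x' ^ s * ?G (Suc s))"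
    by (simp add: sum_distrib_left sum_subtractf algebra_simps)
  also have "(\<Sum>s<L. x' ^ s * ?G s) = ?G 0 + (\<Sum>s<M. x' ^ Suc s * ?G (Suc s))"
    unfolding M sum.lessThan_Suc_shift by simp
  also have "?G L = ?G 0"
    using has_period_disc_sum[OF V, of x L] by (simp add: has_period_def)
  then have "(\<Sum>s<L. x' ^ s * ?G (Suc s)) = (\<Sum>s<M. x' ^ s * ?G (Suc s)) + x' ^ M * ?G 0"
    unfolding M by simp
  also have "(\<Sum>s<L. rotation_weight x x' L s * ?G s)
      = (1 - x * x' ^ M) * ?G 0 + (\<Sum>s<M. x' ^ s * (x' - x) * ?G (Suc s))"
    unfolding M sum.lessThan_Suc_shift by (simp add: rotation_weight_def)
  ultimately show ?thesis
    by (simp add: algebra_simps sum_distrib_left sum_subtractf sum.distrib)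
qed

lemma disc_avg_rotations:
  assumes V: "has_period L V" and "0 < L" "0 < x" "x < x'" "x' \<le> 1"
  shows "disc_avg x' V z L
    = (\<Sum>s<L. rotation_weight x x' L s * (\<Sum>k<L. x ^ k) / ((1 - x ^ L) * (\<Sum>k<L. x' ^ k))
        * disc_avg x V (z + s) L)"
proof -
  define S S' where "S = (\<Sum>k<L. x ^ k)" and "S' = (\<Sum>k<L. x' ^ k)"
  have "0 < 1 - x ^ L"
    using assms by (simp add: power_less_one_iff)
  moreover have "0 < S" "0 < S'"
    using assms by (simp_all add: S_def S'_def sum_powers_pos)
  ultimately have "(\<Sum>s<L. rotation_weight x x' L s * S / ((1 - x ^ L) * S') * disc_avg x V (z + s) L)
      = (\<Sum>s<L. rotation_weight x x' L s * disc_sum x V (z + s) L) / ((1 - x ^ L) * S')"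
    unfolding disc_avg_def S_def[symmetric] sum_divide_distrib by (intro sum.cong) simp_all
  also have "\<dots> = disc_avg x' V z L"
    unfolding disc_sum_rotations[OF V \<open>0 < L\<close>, symmetric] disc_avg_def S'_def[symmetric]
    using \<open>0 < 1 - x ^ L\<close> by simp
  finally show ?thesis
    unfolding S_def S'_def by simp
qed

lemma per_Suc: "per L (Suc q) = q mod L + 1"
  by (simp add: per_def)

definition cycle_stream :: "nat \<Rightarrow> (nat \<Rightarrow> 'b) \<Rightarrow> nat \<Rightarrow> 'b" where
  "cycle_stream L a q = a (per L (Suc q))"

definition stream_cycle :: "nat \<Rightarrow> (nat \<Rightarrow> 'b) \<Rightarrow> nat \<Rightarrow> 'b" where
  "stream_cycle L \<beta> p = (if p \<in> {1..L} then \<beta> (p - 1) else undefined)"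

lemma has_period_cycle_stream: "has_period L (cycle_stream L a)"
  by (simp add: has_period_def cycle_stream_def per_Suc)

lemma range_cycle_stream:
  "0 < L \<Longrightarrow> a \<in> PiE {1..L} (\<lambda>_. A) \<Longrightarrow> range (cycle_stream L a) \<subseteq> A"
  by (auto simp: cycle_stream_def per_def Suc_le_eq)

lemma stream_cycle_in_PiE: "range \<beta> \<subseteq> A \<Longrightarrow> stream_cycle L \<beta> \<in> PiE {1..L} (\<lambda>_. A)"
  by (auto simp: stream_cycle_def)

lemma cycle_stream_stream_cycle:
  assumes "0 < L" "has_period L \<beta>"
  shows "cycle_stream L (stream_cycle L \<beta>) = \<beta>"
proof
  fix q
  show "cycle_stream L (stream_cycle L \<beta>) q = \<beta> q"
    using mod_less_divisor[OF assms(1), of q] has_period_mod[OF assms(2), of q]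
    by (simp add: cycle_stream_def stream_cycle_def per_Suc Suc_le_eq)
qed

lemma Upay_eq_disc_avg:
  "Upay n T \<delta> u a i = disc_avg \<delta> (\<lambda>q. u i (cycle_stream (n * T) a q)) ((i - 1) * T) (n * T)"
  unfolding Upay_def disc_avg_def disc_sum_def cycle_stream_def
    sum.atLeast1_atMost_eq[where g = "\<lambda>k. _ ^ (k - 1) * _", simplified]
  by (simp add: sum.atLeast1_atMost_eq ac_simps)

lemma Fset_subset_by_mixtures:
  fixes c :: "nat \<Rightarrow> real" and \<beta> :: "(nat \<Rightarrow> nat \<Rightarrow> 'a) \<Rightarrow> nat \<Rightarrow> nat \<Rightarrow> nat \<Rightarrow> 'a"
  assumes "0 < n * T" "0 < n * T'"
    and c: "\<forall>k<m. 0 \<le> c k" "(\<Sum>k<m. c k) = 1"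
    and \<beta>: "\<And>\<alpha> k. has_period (n * T) \<alpha> \<Longrightarrow> range \<alpha> \<subseteq> PiE {1..n} Aset \<Longrightarrow> k < m \<Longrightarrow>
      has_period (n * T') (\<beta> \<alpha> k) \<and> range (\<beta> \<alpha> k) \<subseteq> PiE {1..n} Aset"
    and avg: "\<And>\<alpha> i. has_period (n * T) \<alpha> \<Longrightarrow> range \<alpha> \<subseteq> PiE {1..n} Aset \<Longrightarrow> i \<in> {1..n} \<Longrightarrow>
      disc_avg \<delta> (\<lambda>q. u i (\<alpha> q)) ((i - 1) * T) (n * T)
        = (\<Sum>k<m. c k * disc_avg \<delta>' (\<lambda>q. u i (\<beta> \<alpha> k q)) ((i - 1) * T') (n * T'))"
  shows "Fset n Aset u \<delta> T \<subseteq> Fset n Aset u \<delta>' T'"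
  unfolding Fset_def
proof (rule co_minimal, rule ballI)
  let ?P' = "PiE {1..n * T'} (\<lambda>_. PiE {1..n} Aset)"
  fix y assume "y \<in> Uvec n T \<delta> u ` PiE {1..n * T} (\<lambda>_. PiE {1..n} Aset)"
  then obtain a where a: "a \<in> PiE {1..n * T} (\<lambda>_. PiE {1..n} Aset)" and y: "y = Uvec n T \<delta> u a"
    by blast
  let ?\<alpha> = "cycle_stream (n * T) a"
  have \<alpha>: "has_period (n * T) ?\<alpha>" "range ?\<alpha> \<subseteq> PiE {1..n} Aset"
    using has_period_cycle_stream range_cycle_stream[OF assms(1) a] by blast+
  define b where "b k = stream_cycle (n * T') (\<beta> ?\<alpha> k)" for k
  have b_mem: "b k \<in> ?P'" if "k < m" for k
    unfolding b_def by (rule stream_cycle_in_PiE, rule conjunct2[OF \<beta>[OF \<alpha> that]])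
  have b_stream: "cycle_stream (n * T') (b k) = \<beta> ?\<alpha> k" if "k < m" for k
    using \<beta>[OF \<alpha> that] by (simp add: b_def cycle_stream_stream_cycle[OF assms(2)])
  have "Uvec n T \<delta> u a i = (\<Sum>k<m. c k * Uvec n T' \<delta>' u (b k) i)" for i
  proof (cases "i \<in> {1..n}")
    case True
    then show ?thesis
      using avg[OF \<alpha> True] b_stream by (simp add: Uvec_def Upay_eq_disc_avg)
  next
    case False
    then show ?thesis
      by (auto simp: Uvec_def)
  qed
  then have "y = (\<lambda>i. \<Sum>k<m. c k * Uvec n T' \<delta>' u (b k) i)"
    by (simp add: y fun_eq_iff)
  also have "\<dots> \<in> co (Uvec n T' \<delta>' u ` ?P')"
    using b_mem c by (intro co_convex_comb) (auto intro: co_inc)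
  finally show "y \<in> co (Uvec n T' \<delta>' u ` ?P')" .
qed

lemma Fset_antimono_discount:
  assumes "0 < n * T" "0 < \<delta>" "\<delta> < \<delta>'" "\<delta>' \<le> 1"
  shows "Fset n Aset u \<delta>' T \<subseteq> Fset n Aset u \<delta> T"
proof -
  let ?L = "n * T"
  define c where "c s = rotation_weight \<delta> \<delta>' ?L s * (\<Sum>k<?L. \<delta> ^ k) / ((1 - \<delta> ^ ?L) * (\<Sum>k<?L. \<delta>' ^ k))" for s
  have avg: "disc_avg \<delta>' V z ?L = (\<Sum>s<?L. c s * disc_avg \<delta> (\<lambda>q. V (q + s)) z ?L)"
    if "has_period ?L V" for V z
    using disc_avg_rotations[OF that assms] by (simp add: c_def disc_avg_shift)
  have c_sum: "(\<Sum>s<?L. c s) = 1"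
    using avg[of "\<lambda>_. 1" 0] assms by (simp add: has_period_def disc_avg_const_one)
  have c_nonneg: "0 \<le> c s" for s
  proof -
    have "\<delta> ^ ?L < 1"
      using assms by (simp add: power_less_one_iff)
    then show ?thesis
      using assms rotation_weight_nonneg[of \<delta> \<delta>' ?L s] sum_powers_pos[of \<delta> ?L] sum_powers_pos[of \<delta>' ?L]
      by (simp add: c_def)
  qed
  have payoff_period: "has_period ?L (\<lambda>q. u i (\<alpha> q))" if "has_period ?L \<alpha>" for i and \<alpha> :: "nat \<Rightarrow> nat \<Rightarrow> 'a"
    using that by (simp add: has_period_def)
  show ?thesis
  proof (rule Fset_subset_by_mixtures[where \<beta> = "\<lambda>\<alpha> s q. \<alpha> (q + s)" and c = c and m = ?L])
    show "has_period ?L (\<lambda>q. \<alpha> (q + s)) \<and> range (\<lambda>q. \<alpha> (q + s)) \<subseteq> PiE {1..n} Aset"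
      if "has_period ?L \<alpha>" "range \<alpha> \<subseteq> PiE {1..n} Aset" for \<alpha> :: "nat \<Rightarrow> nat \<Rightarrow> 'a" and s
      using that by (simp add: has_period_shift image_subset_iff)
  qed (use assms(1) in \<open>simp_all add: c_sum c_nonneg payoff_period avg\<close>)
qed

definition pad_stream :: "nat \<Rightarrow> (nat \<Rightarrow> 'b) \<Rightarrow> nat \<Rightarrow> nat \<Rightarrow> 'b" where
  "pad_stream T \<alpha> k q =
    (if q mod (T + 1) < T then \<alpha> (q div (T + 1) * T + q mod (T + 1))
     else \<alpha> ((q div (T + 1) + 1) * T + k))"

lemma div_mod_block:
  fixes d :: nat
  assumes "s < d"
  shows "(l * d + s) div d = l" "(l * d + s) mod d = s"
  using assms by (simp_all add: add.commute[of "l * d"])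

lemma pad_stream_block: "s < T \<Longrightarrow> pad_stream T \<alpha> k (l * (T + 1) + s) = \<alpha> (l * T + s)"
  using div_mod_block[of s "T + 1" l] by (simp add: pad_stream_def)

lemma pad_stream_extra: "pad_stream T \<alpha> k (l * (T + 1) + T) = \<alpha> ((l + 1) * T + k)"
  using div_mod_block[of T "T + 1" l] by (simp add: pad_stream_def)

lemma has_period_pad_stream:
  assumes "has_period (n * T) \<alpha>"
  shows "has_period (n * (T + 1)) (pad_stream T \<alpha> k)"
  unfolding has_period_def
proof
  fix q
  let ?l = "q div (T + 1)" and ?s = "q mod (T + 1)"
  have shift: "\<alpha> (p + n * T) = \<alpha> p" for p
    using assms by (simp add: has_period_def)
  have div_mod: "(q + n * (T + 1)) div (T + 1) = ?l + n" "(q + n * (T + 1)) mod (T + 1) = ?s"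
    using div_mult_self1[of "T + 1" q n] mod_mult_self1[of q n "T + 1"] by simp_all
  have index: "(?l + n) * T + ?s = (?l * T + ?s) + n * T" "(?l + n + 1) * T + k = ((?l + 1) * T + k) + n * T"
    by (simp_all add: algebra_simps)
  show "pad_stream T \<alpha> k (q + n * (T + 1)) = pad_stream T \<alpha> k q"
    by (simp only: pad_stream_def div_mod index shift)
qed

text \<open>In the application \<open>B l\<close> is the discounted value of block \<open>l\<close> and \<open>G l\<close> that of the whole
  cycle started at block \<open>l\<close>; the left-hand side is then \<open>\<Sum>k<n * T. x ^ k\<close> times the value of
  the padded cycle.\<close>

lemma padded_blocks_telescope:
  fixes B G :: "nat \<Rightarrow> real"
  assumes "x \<noteq> 1" and G_period: "G (j + n) = G j"
    and G_step: "\<And>l. G l = (1 - x ^ (n * T)) * B l + x ^ T * G (Suc l)"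
  shows "(\<Sum>m<n. (x ^ (T + 1)) ^ m * ((\<Sum>k<n * T. x ^ k) * B (j + m) + x ^ T * G (Suc (j + m))))
    = (\<Sum>k<n * (T + 1). x ^ k) * G j"
proof -
  define y S S' where "y = x ^ (T + 1)" and "S = (\<Sum>k<n * T. x ^ k)" and "S' = (\<Sum>k<n * (T + 1). x ^ k)"
  have S_closed: "(1 - x) * S = 1 - x ^ (n * T)"
    unfolding S_def by (rule one_diff_power_eq[symmetric])
  have "y ^ n = x ^ (n * (T + 1))"
    unfolding y_def by (metis mult.commute power_mult)
  then have S'_closed: "(1 - x) * S' = 1 - y ^ n"
    unfolding S'_def by (simp only: one_diff_power_eq)
  have telescope: "(1 - x) * (S * B l + x ^ T * G (Suc l)) = G l - y * G (Suc l)" for l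
  proof -
    have "(1 - x) * (S * B l + x ^ T * G (Suc l)) = (1 - x) * S * B l + (1 - x) * x ^ T * G (Suc l)"
      by (simp add: algebra_simps)
    also have "\<dots> = G l - y * G (Suc l)"
      unfolding S_closed G_step[of l] y_def by (simp add: algebra_simps)
    finally show ?thesis .
  qed
  have "(1 - x) * (y ^ m * (S * B (j + m) + x ^ T * G (Suc (j + m))))
      = y ^ m * G (j + m) - y ^ Suc m * G (j + Suc m)" for m
    by (simp only: mult.left_commute[of "1 - x"] telescope) (simp add: algebra_simps)
  then have "(1 - x) * (\<Sum>m<n. y ^ m * (S * B (j + m) + x ^ T * G (Suc (j + m))))
      = (\<Sum>m<n. y ^ m * G (j + m) - y ^ Suc m * G (j + Suc m))"
    by (simp add: sum_distrib_left)
  also have "\<dots> = G j - y ^ n * G (j + n)"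
    using sum_lessThan_telescope'[where f = "\<lambda>m. y ^ m * G (j + m)" and m = n] by simp
  also have "\<dots> = (1 - x) * (S' * G j)"
    unfolding G_period mult.assoc[symmetric] S'_closed by (simp add: algebra_simps)
  finally show ?thesis
    using assms(1) unfolding y_def S_def S'_def by simp
qed

lemma padded_blocks_identity:
  fixes B G :: "nat \<Rightarrow> real"
  assumes G_blocks: "G j = (\<Sum>m<n. (x ^ T) ^ m * B (j + m))" and G_period: "G (j + n) = G j"
    and G_step: "\<And>l. G l = (1 - x ^ (n * T)) * B l + x ^ T * G (Suc l)"
  shows "(\<Sum>m<n. (x ^ (T + 1)) ^ m * ((\<Sum>k<n * T. x ^ k) * B (j + m) + x ^ T * G (Suc (j + m))))
    = (\<Sum>k<n * (T + 1). x ^ k) * G j"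
proof (cases "x = 1")
  case True
  have "G (Suc l) = G l" for l
    using G_step[of l] True by simp
  then have G_zero: "G l = G 0" for l
    by (induction l) simp_all
  have G_const: "G (Suc l) = G j" for l
    using G_zero[of "Suc l"] G_zero[of j] by simp
  have "(\<Sum>m<n. (x ^ (T + 1)) ^ m * ((\<Sum>k<n * T. x ^ k) * B (j + m) + x ^ T * G (Suc (j + m))))
      = real (n * T) * (\<Sum>m<n. B (j + m)) + real n * G j"
    by (simp add: True G_const sum.distrib sum_distrib_left)
  also have "\<dots> = real (n * (T + 1)) * G j"
    using G_blocks True by (simp add: algebra_simps)
  finally show ?thesis
    using True by simp
next
  case False
  then show ?thesis
    using G_period G_step by (rule padded_blocks_telescope)
qed

lemma disc_avg_padded:
  fixes V W :: "nat \<Rightarrow> real"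
  assumes "0 < n" "0 < T" "0 < x" and V: "has_period (n * T) V"
    and W_block: "\<And>l s. s < T \<Longrightarrow> W (l * (T + 1) + s) = V (l * T + s)"
    and W_extra: "\<And>l. W (l * (T + 1) + T) = disc_avg x V ((l + 1) * T) (n * T)"
  shows "disc_avg x W (j * (T + 1)) (n * (T + 1)) = disc_avg x V (j * T) (n * T)"
proof -
  define S S' where "S = (\<Sum>k<n * T. x ^ k)" and "S' = (\<Sum>k<n * (T + 1). x ^ k)"
  define B G where "B l = disc_sum x V (l * T) T" and "G l = disc_sum x V (l * T) (n * T)" for l
  have "0 < S" "0 < S'"
    using assms by (simp_all add: S_def S'_def sum_powers_pos)
  have padded_block: "disc_sum x W (l * (T + 1)) (T + 1) = (S * B l + x ^ T * G (Suc l)) / S" for l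
  proof -
    have "disc_sum x W (l * (T + 1)) (T + 1) = B l + x ^ T * G (Suc l) / S"
      using W_block W_extra[of l] by (simp add: disc_sum_def B_def G_def S_def disc_avg_def)
    then show ?thesis
      using \<open>0 < S\<close> by (simp add: field_simps)
  qed
  have "disc_sum x W (j * (T + 1)) (n * (T + 1))
      = (\<Sum>m<n. (x ^ (T + 1)) ^ m * (S * B (j + m) + x ^ T * G (Suc (j + m)))) / S"
    unfolding disc_sum_blocks[of x W j "T + 1" n] disc_sum_def[of "x ^ (T + 1)"] padded_block sum_divide_distrib
    by simp
  also have "\<dots> = S' * G j / S"
  proof -
    have "G j = (\<Sum>m<n. (x ^ T) ^ m * B (j + m))"
      unfolding G_def B_def disc_sum_blocks by (simp add: disc_sum_def)
    moreover have "G (j + n) = G j"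
      using has_period_disc_sum[OF V, of x "n * T"] by (simp add: G_def has_period_def algebra_simps)
    ultimately show ?thesis
      unfolding S_def S'_def
      by (subst padded_blocks_identity[where B = B]) (simp_all add: B_def G_def disc_sum_block_step[OF V])
  qed
  finally show ?thesis
    using \<open>0 < S'\<close> by (simp add: disc_avg_def S_def S'_def G_def)
qed

lemma Fset_mono_period:
  assumes "0 < n * T" "0 < \<delta>" "\<delta> \<le> 1"
  shows "Fset n Aset u \<delta> T \<subseteq> Fset n Aset u \<delta> (T + 1)"
proof -
  let ?L = "n * T"
  define c where "c k = \<delta> ^ k / (\<Sum>k<?L. \<delta> ^ k)" for k
  have c_sum: "(\<Sum>k<?L. c k) = 1"
    using sum_powers_pos[OF assms(2,1)] by (simp add: c_def flip: sum_divide_distrib)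
  have c_nonneg: "0 \<le> c k" for k
    using sum_powers_pos[OF assms(2,1)] assms(2) by (simp add: c_def)
  have avg: "disc_avg \<delta> (\<lambda>q. V (\<alpha> q)) (j * T) ?L
      = (\<Sum>k<?L. c k * disc_avg \<delta> (\<lambda>q. V (pad_stream T \<alpha> k q)) (j * (T + 1)) (n * (T + 1)))"
    if "has_period ?L \<alpha>" for V :: "(nat \<Rightarrow> 'a) \<Rightarrow> real" and \<alpha> j
  proof -
    define W where "W q = (\<Sum>k<?L. c k * V (pad_stream T \<alpha> k q))" for q
    have "has_period ?L (\<lambda>q. V (\<alpha> q))"
      using that by (simp add: has_period_def)
    moreover have "W (l * (T + 1) + s) = V (\<alpha> (l * T + s))" if "s < T" for l s
      unfolding W_def pad_stream_block[OF that] sum_distrib_right[symmetric] c_sum by simp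
    moreover have "W (l * (T + 1) + T) = disc_avg \<delta> (\<lambda>q. V (\<alpha> q)) ((l + 1) * T) ?L" for l
      unfolding W_def pad_stream_extra by (simp add: disc_avg_def disc_sum_def c_def sum_divide_distrib)
    ultimately have "disc_avg \<delta> W (j * (T + 1)) (n * (T + 1)) = disc_avg \<delta> (\<lambda>q. V (\<alpha> q)) (j * T) ?L"
      using assms by (intro disc_avg_padded) simp_all
    then show ?thesis
      by (simp add: W_def[abs_def] disc_avg_linear)
  qed
  show ?thesis
  proof (rule Fset_subset_by_mixtures[where \<beta> = "pad_stream T" and c = c and m = ?L])
    show "has_period (n * (T + 1)) (pad_stream T \<alpha> k) \<and> range (pad_stream T \<alpha> k) \<subseteq> PiE {1..n} Aset"
      if "has_period ?L \<alpha>" "range \<alpha> \<subseteq> PiE {1..n} Aset" for \<alpha> :: "nat \<Rightarrow> nat \<Rightarrow> 'a" and k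
      using that has_period_pad_stream by (auto simp: pad_stream_def image_subset_iff)
    show "disc_avg \<delta> (\<lambda>q. u i (\<alpha> q)) ((i - 1) * T) ?L
      = (\<Sum>k<?L. c k * disc_avg \<delta> (\<lambda>q. u i (pad_stream T \<alpha> k q)) ((i - 1) * (T + 1)) (n * (T + 1)))"
      if "has_period ?L \<alpha>" for \<alpha> :: "nat \<Rightarrow> nat \<Rightarrow> 'a" and i
      using avg[OF that] .
  qed (use assms(1) in \<open>simp_all add: c_sum c_nonneg\<close>)
qed

theorem theorem2:
  fixes n :: nat and Aset :: "nat \<Rightarrow> 'a set" and u :: "nat \<Rightarrow> (nat \<Rightarrow> 'a) \<Rightarrow> real"
  assumes "n \<ge> 2"
    and "\<forall>i\<in>{1..n}. finite (Aset i) \<and> Aset i \<noteq> {}"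
  shows "(\<forall>\<delta> \<delta>' T. 0 < \<delta> \<and> \<delta> < \<delta>' \<and> \<delta>' \<le> 1 \<and> T \<ge> 1 \<longrightarrow>
            Fset n Aset u \<delta>' T \<subseteq> Fset n Aset u \<delta> T)
       \<and> (\<forall>\<delta> T. 0 < \<delta> \<and> \<delta> \<le> 1 \<and> T \<ge> 1 \<longrightarrow>
            Fset n Aset u \<delta> T \<subseteq> Fset n Aset u \<delta> (T + 1))"
proof (intro conjI allI impI)
  \<comment> \<open>The action sets need not be finite or nonempty.\<close>
  fix \<delta> \<delta>' :: real and T :: nat
  assume "0 < \<delta> \<and> \<delta> < \<delta>' \<and> \<delta>' \<le> 1 \<and> T \<ge> 1"
  then show "Fset n Aset u \<delta>' T \<subseteq> Fset n Aset u \<delta> T"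
    using assms(1) by (intro Fset_antimono_discount) auto
next
  fix \<delta> :: real and T :: nat
  assume "0 < \<delta> \<and> \<delta> \<le> 1 \<and> T \<ge> 1"
  then show "Fset n Aset u \<delta> T \<subseteq> Fset n Aset u \<delta> (T + 1)"
    using assms(1) by (intro Fset_mono_period) auto
qed

end
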